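(* Consider the subclass of SCMs in $\mathcal{M}$ that have a set of endogenous variables $Z$ such that $Y\perp\!\!\!\perp\{D,\Theta\}\mid X,Z$ and for which $\mathbb{P}(X,Z\mid\mathrm{do}(D=d,\Theta=\theta))\ll\mathbb{P}(X,Z\mid\mathrm{do}(D=d',\Theta=\theta'))$ for all $d,d',\theta,\theta'$. In this subclass: (T1) The deployment effect $\tau(\theta)$ is identifiable from $\{\mathbb{P}(X,Y,Z\mid\mathrm{do}(D=0)),\ \mathbb{P}(X,Z\mid\mathrm{do}(D=1,\Theta=\theta))\}$ via $$\tau(\theta)=\mathbb{E}\big[\mathbb{E}[Y\mid X,Z,\mathrm{do}(D=0)]\,\big|\,\mathrm{do}(D=1,\Theta=\theta)\big]-\mathbb{E}[Y\mid\mathrm{do}(D=0)],$$ and from $\{\mathbb{P}(X,Y,Z\mid\mathrm{do}(D=1,\Theta=\theta)),\ \mathbb{P}(X,Z\mid\mathrm{do}(D=0))\}$ via $$\tau(\theta)=\mathbb{E}[Y\mid\mathrm{do}(D=1,\Theta=\theta)]-\mathbb{E}\big[\mathbb{E}[Y\mid X,Z,\mathrm{do}(D=1,\Theta=\theta)]\,\big|\,\mathrm{do}(D=0)\big].$$ (T2) The retraining effect $\rho(\theta_{t+1},\theta_t)$ is identifiable from $\{\mathbb{P}(X,Y,Z\mid\mathrm{do}(D=1,\Theta=\theta_t)),\ \mathbb{P}(X,Z\mid\mathrm{do}(D=1,\Theta=\theta_{t+1}))\}$ via $$\rho(\theta_{t+1},\theta_t)=\mathbb{E}\big[\mathbb{E}[Y\mid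 X,Z,\mathrm{do}(D=1,\Theta=\theta_t)]\,\big|\,\mathrm{do}(D=1,\Theta=\theta_{t+1})\big]-\mathbb{E}[Y\mid\mathrm{do}(D=1,\Theta=\theta_t)].$$ (T3) The baseline predictor $\mathbb{E}[Y\mid X,\mathrm{do}(D=0)]$ is identifiable from $\{\mathbb{P}(X,Y,Z\mid\mathrm{do}(D=1,\Theta=\theta)),\ \mathbb{P}(X,Z\mid\mathrm{do}(D=0))\}$ via $$\mathbb{E}[Y\mid X,\mathrm{do}(D=0)]=\mathbb{E}\big[\mathbb{E}[Y\mid X,Z,\mathrm{do}(D=1,\Theta=\theta)]\,\big|\,X,\mathrm{do}(D=0)\big].$$
   Context: Setting: all variables take values in subsets of Euclidean spaces with Borel $\sigma$-algebras. Variables: features $X$ (possibly multidimensional), target $Y$ (real-valued), prediction $\hat{Y}$, and two input (non-random, externally set) variables: a domain indicator $D\in\{0,1\}$ ($D=0$: the decision support system is not deployed; $D=1$: it is deployed) and parameters $\Theta$. A structural causal model (SCM) with input variables $\{D,\Theta\}$ induces, for every value $(d,\theta)$, a distribution $\mathbb{P}(\cdot\mid\mathrm{do}(D=d,\Theta=\theta))$ on the endogenous variables, the push-forward of the independent exogenous distributions through the structural equations; $\mathbb{P}(\cdot\mid\mathrm{do}(D=0))$ denotes this distribution with $D=0$. The class $\mathcal{M}$: the set of SCMs with endogenous variables $V\supseteq\{X,\hat{Y},Y\}$, input variables $\{D,\Theta\}$, and graph $G$ such that the parents of $\hat{Y}$ are exactly $\{X,\Theta\}$, the children of $D$ equal the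 children of $\hat{Y}$, and the latent projection of $G$ onto $\{X,\hat{Y},Y,D,\Theta\}$ is a subgraph of the acyclic directed mixed graph with edges $X\to\hat{Y}$, $\Theta\to\hat{Y}$, $X\to Y$, $\hat{Y}\to Y$, $D\to Y$, $X\leftrightarrow Y$. Identifiability: a target quantity $t(M)$ is identifiable in a class from a set $s(M)$ of distributions induced by $M$ if $s(M_1)=s(M_2)\implies t(M_1)=t(M_2)$ for all $M_1,M_2$ in the class. Deployment effect: $\tau(\theta):=\mathbb{E}[Y\mid\mathrm{do}(D=1,\Theta=\theta)]-\mathbb{E}[Y\mid\mathrm{do}(D=0)]$. Retraining effect: $\rho(\theta_{t+1},\theta_t):=\mathbb{E}[Y\mid\mathrm{do}(D=1,\Theta=\theta_{t+1})]-\mathbb{E}[Y\mid\mathrm{do}(D=1,\Theta=\theta_t)]$. Baseline predictor: $\mathbb{E}[Y\mid X,\mathrm{do}(D=0)]$. The conditional independence $Y\perp\!\!\!\perp\{D,\Theta\}\mid X,Z$ between a random variable and input variables is meant in the transitional sense (e.g. implied by d-separation in the graph). $\ll$ denotes absolute continuity. *)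

theory Defs
  imports "HOL-Probability.Probability"
begin

text \<open>
  Abstract rendering of the interventional distributions induced by an SCM of the
  class considered in the paper.  For every regime we keep the joint distribution of
  the endogenous variables of interest, arranged as a point ((x, z), y) of the space
  ('x \<times> 'z) \<times> real with its Borel sigma-algebra:
    P0        = P(X, Z, Y | do(D = 0))
    P1 theta  = P(X, Z, Y | do(D = 1, Theta = theta)).
  The regime None stands for do(D=0), the regime Some theta for do(D=1, Theta=theta).
\<close>

definition regime ::
  "'a measure \<Rightarrow> ('p \<Rightarrow> 'a measure) \<Rightarrow> 'p option \<Rightarrow> 'a measure" where
  "regime P0 P1 r = (case r of None \<Rightarrow> P0 | Some th \<Rightarrow> P1 th)"

definition valid_regime :: "(('x::euclidean_space \<times> 'z::euclidean_space) \<times> real) measure \<Rightarrow> bool" where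
  "valid_regime M \<longleftrightarrow> prob_space M \<and> sets M = sets borel \<and> integrable M snd"

definition marg_XZ :: "(('x::euclidean_space \<times> 'z::euclidean_space) \<times> real) measure \<Rightarrow> ('x \<times> 'z) measure" where
  "marg_XZ M = distr M borel fst"

definition compose_kernel ::
  "(('x::euclidean_space \<times> 'z::euclidean_space) \<times> real) measure \<Rightarrow> ('x \<times> 'z \<Rightarrow> real measure)
     \<Rightarrow> (('x \<times> 'z) \<times> real) measure" where
  "compose_kernel M K = marg_XZ M \<bind> (\<lambda>w. K w \<bind> (\<lambda>y. return borel (w, y)))"

text \<open>Transitional conditional independence  Y \<bottom> {D, Theta} | X, Z :
  there is one Markov kernel P(Y | X, Z) valid in every regime (d, theta).\<close>
definition trans_CI :: "(('x::euclidean_space \<times> 'z::euclidean_space) \<times> real) measure \<Rightarrow> ('p \<Rightarrow> (('x \<times> 'z) \<times> real) measure) \<Rightarrow> bool" where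
  "trans_CI P0 P1 \<longleftrightarrow>
     (\<exists>K. K \<in> borel \<rightarrow>\<^sub>M prob_algebra borel \<and>
          (\<forall>r. regime P0 P1 r = compose_kernel (regime P0 P1 r) K))"

text \<open>P(X,Z | do(d,theta)) \<ll> P(X,Z | do(d',theta')) for all regimes.
  (Library: absolutely_continuous M N means N \<ll> M.)\<close>
definition XZ_abs_cont :: "(('x::euclidean_space \<times> 'z::euclidean_space) \<times> real) measure \<Rightarrow> ('p \<Rightarrow> (('x \<times> 'z) \<times> real) measure) \<Rightarrow> bool" where
  "XZ_abs_cont P0 P1 \<longleftrightarrow>
     (\<forall>r r'. absolutely_continuous (marg_XZ (regime P0 P1 r')) (marg_XZ (regime P0 P1 r)))"

definition in_subclass :: "(('x::euclidean_space \<times> 'z::euclidean_space) \<times> real) measure \<Rightarrow> ('p \<Rightarrow> (('x \<times> 'z) \<times> real) measure) \<Rightarrow> bool" where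
  "in_subclass P0 P1 \<longleftrightarrow>
     (\<forall>r. valid_regime (regime P0 P1 r)) \<and> trans_CI P0 P1 \<and> XZ_abs_cont P0 P1"

definition sigma_XZ :: "(('x::euclidean_space \<times> 'z::euclidean_space) \<times> real) measure" where
  "sigma_XZ = vimage_algebra UNIV fst borel"

definition sigma_X :: "(('x::euclidean_space \<times> 'z::euclidean_space) \<times> real) measure" where
  "sigma_X = vimage_algebra UNIV (\<lambda>w. fst (fst w)) borel"

definition EY :: "(('x::euclidean_space \<times> 'z::euclidean_space) \<times> real) measure \<Rightarrow> real" where
  "EY M = (\<integral>w. snd w \<partial>M)"

definition CE_Y_XZ :: "(('x::euclidean_space \<times> 'z::euclidean_space) \<times> real) measure \<Rightarrow> (('x \<times> 'z) \<times> real) \<Rightarrow> real" where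
  "CE_Y_XZ M = real_cond_exp M sigma_XZ snd"

definition CE_X :: "(('x::euclidean_space \<times> 'z::euclidean_space) \<times> real) measure \<Rightarrow> ((('x \<times> 'z) \<times> real) \<Rightarrow> real) \<Rightarrow> (('x \<times> 'z) \<times> real) \<Rightarrow> real" where
  "CE_X M f = real_cond_exp M sigma_X f"

definition deploy_effect :: "(('x::euclidean_space \<times> 'z::euclidean_space) \<times> real) measure \<Rightarrow> ('p \<Rightarrow> (('x \<times> 'z) \<times> real) measure) \<Rightarrow> 'p \<Rightarrow> real" where
  "deploy_effect P0 P1 th = EY (P1 th) - EY P0"

definition retrain_effect :: "('p \<Rightarrow> (('x::euclidean_space \<times> 'z::euclidean_space) \<times> real) measure) \<Rightarrow> 'p \<Rightarrow> 'p \<Rightarrow> real" where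
  "retrain_effect P1 th_next th_cur = EY (P1 th_next) - EY (P1 th_cur)"

end

theory Submission
  imports Defs
begin

text \<open>
  All regimes share one Markov kernel K for Y given (X, Z), so in every regime the regression
  E[Y | X, Z] is almost surely the kernel mean v \<mapsto> \<integral>y dK(v) evaluated at (X, Z).
  Mutual absolute continuity of the (X, Z)-marginals transports this almost-sure equality from
  one regime to another, so the regressions of all regimes agree almost surely in each regime.
  Integrating the regression of one regime against another therefore yields the mean of Y in
  the latter, and the tower property gives E[Y | X] = E[E[Y | X, Z] | X] with the inner
  regression taken from any regime. Identifiability follows because integrals and conditional
  expectations of (X, Z)-measurable functions depend only on the (X, Z)-marginal.
\<close>

definition kernel_prod :: "'a::topological_space measure \<Rightarrow> ('a \<Rightarrow> 'b::topological_space measure)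
    \<Rightarrow> ('a \<times> 'b) measure" where
  "kernel_prod N K = N \<bind> (\<lambda>v. K v \<bind> (\<lambda>y. return borel (v, y)))"

context
  fixes K :: "'a::second_countable_topology \<Rightarrow> 'b::second_countable_topology measure"
  assumes K: "K \<in> borel \<rightarrow>\<^sub>M prob_algebra borel"
begin

lemma sets_kernel_borel: "sets (K v) = sets borel"
  and prob_space_kernel: "prob_space (K v)"
  using measurable_space[OF K, of v] by (auto simp: space_prob_algebra)

lemma measurable_Pair_kernel: "Pair v \<in> K v \<rightarrow>\<^sub>M borel"
  unfolding measurable_cong_sets[OF sets_kernel_borel refl] borel_prod[symmetric] by measurable

lemma kernel_section_eq_distr:
  "K v \<bind> (\<lambda>y. return borel (v, y)) = distr (K v) borel (Pair v)"
  using prob_space.not_empty[OF prob_space_kernel] measurable_Pair_kernel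
  by (rule bind_return_distr')

lemma measurable_kernel_section:
  "(\<lambda>v. K v \<bind> (\<lambda>y. return borel (v, y))) \<in> borel \<rightarrow>\<^sub>M subprob_algebra borel"
proof -
  have "(\<lambda>x. return (borel :: ('a \<times> 'b) measure) (fst x, snd x)) \<in> borel \<Otimes>\<^sub>M borel \<rightarrow>\<^sub>M subprob_algebra borel"
    unfolding borel_prod by simp
  then show ?thesis
    by (intro measurable_bind[OF measurable_prob_algebraD[OF K]])
qed

lemma measurable_kernel_integral:
  fixes f :: "'a \<times> 'b \<Rightarrow> real"
  assumes f: "f \<in> borel_measurable borel"
  shows "(\<lambda>v. \<integral>y. f (v, y) \<partial>K v) \<in> borel_measurable borel"
proof -
  have "(\<lambda>v. \<integral>w. f w \<partial>(K v \<bind> (\<lambda>y. return borel (v, y)))) \<in> borel_measurable borel"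
    by (rule measurable_compose[OF measurable_kernel_section integral_measurable_subprob_algebra])
      (use f in measurable)
  then show ?thesis
    by (simp add: kernel_section_eq_distr integral_distr[OF measurable_Pair_kernel f])
qed

lemma nn_integral_kernel_prod:
  assumes N: "sets N = sets borel" and f: "f \<in> borel_measurable borel"
  shows "(\<integral>\<^sup>+w. f w \<partial>kernel_prod N K) = (\<integral>\<^sup>+v. \<integral>\<^sup>+y. f (v, y) \<partial>K v \<partial>N)"
proof -
  have "(\<integral>\<^sup>+w. f w \<partial>kernel_prod N K) = (\<integral>\<^sup>+v. \<integral>\<^sup>+w. f w \<partial>(K v \<bind> (\<lambda>y. return borel (v, y))) \<partial>N)"
    unfolding kernel_prod_def
    by (rule nn_integral_bind[OF f]) (simp add: measurable_cong_sets[OF N refl] measurable_kernel_section)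
  also have "\<dots> = (\<integral>\<^sup>+v. \<integral>\<^sup>+y. f (v, y) \<partial>K v \<partial>N)"
    by (simp add: kernel_section_eq_distr nn_integral_distr[OF measurable_Pair_kernel] f)
  finally show ?thesis .
qed

lemma integral_kernel_prod_nonneg:
  fixes f :: "'a \<times> 'b \<Rightarrow> real"
  assumes N: "sets N = sets borel" and f: "f \<in> borel_measurable borel" and nonneg: "\<And>w. 0 \<le> f w"
    and int: "integrable (kernel_prod N K) f"
  shows "AE v in N. integrable (K v) (\<lambda>y. f (v, y))"
    and "integrable N (\<lambda>v. \<integral>y. f (v, y) \<partial>K v)"
    and "(\<integral>w. f w \<partial>kernel_prod N K) = (\<integral>v. \<integral>y. f (v, y) \<partial>K v \<partial>N)"
proof -
  define F where "F v = (\<integral>\<^sup>+y. ennreal (f (v, y)) \<partial>K v)" for v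
  define G where "G v = (\<integral>y. f (v, y) \<partial>K v)" for v
  have f_section: "(\<lambda>y. f (v, y)) \<in> borel_measurable (K v)" for v
    using measurable_comp[OF measurable_Pair_kernel f] by (simp add: comp_def)
  have "F \<in> borel_measurable borel"
    unfolding F_def
    by (rule nn_integral_measurable_subprob_algebra2[OF _ measurable_prob_algebraD[OF K]])
      (use f in \<open>simp add: borel_prod case_prod_beta'\<close>)
  then have F_meas: "F \<in> borel_measurable N"
    by (simp add: measurable_cong_sets[OF N refl])
  have G_meas: "G \<in> borel_measurable N"
    unfolding G_def measurable_cong_sets[OF N refl] by (rule measurable_kernel_integral[OF f])
  have F_integral: "(\<integral>\<^sup>+v. F v \<partial>N) = ennreal (\<integral>w. f w \<partial>kernel_prod N K)"
    unfolding F_def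
    using nn_integral_kernel_prod[OF N, of "\<lambda>w. ennreal (f w)"] nn_integral_eq_integral[OF int] f nonneg
    by simp
  then have "AE v in N. F v \<noteq> \<infinity>"
    by (intro nn_integral_PInf_AE[OF F_meas]) simp
  then have sections: "AE v in N. integrable (K v) (\<lambda>y. f (v, y)) \<and> F v = ennreal (G v)"
  proof eventually_elim
    case (elim v)
    then have "integrable (K v) (\<lambda>y. f (v, y))"
      by (intro integrableI_nonneg[OF f_section]) (simp_all add: nonneg F_def less_top)
    then show ?case
      unfolding F_def G_def by (simp add: nn_integral_eq_integral nonneg)
  qed
  then show "AE v in N. integrable (K v) (\<lambda>y. f (v, y))"
    by auto
  have G_nn_integral: "(\<integral>\<^sup>+v. ennreal (G v) \<partial>N) = ennreal (\<integral>w. f w \<partial>kernel_prod N K)"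
  proof -
    have "(\<integral>\<^sup>+v. ennreal (G v) \<partial>N) = (\<integral>\<^sup>+v. F v \<partial>N)"
      by (rule nn_integral_cong_AE) (use sections in auto)
    with F_integral show ?thesis by simp
  qed
  have G_nonneg: "AE v in N. 0 \<le> G v"
    by (simp add: G_def nonneg)
  show "integrable N (\<lambda>v. \<integral>y. f (v, y) \<partial>K v)"
    using integrableI_nn_integral_finite[OF G_meas G_nonneg G_nn_integral] by (simp add: G_def[abs_def])
  show "(\<integral>w. f w \<partial>kernel_prod N K) = (\<integral>v. \<integral>y. f (v, y) \<partial>K v \<partial>N)"
    using integral_eq_nn_integral[OF G_meas G_nonneg] G_nn_integral
    by (simp add: G_def[abs_def] nonneg)
qed

lemma integral_kernel_prod:
  fixes f :: "'a \<times> 'b \<Rightarrow> real"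
  assumes N: "sets N = sets borel" and f: "f \<in> borel_measurable borel"
    and int: "integrable (kernel_prod N K) f"
  shows "integrable N (\<lambda>v. \<integral>y. f (v, y) \<partial>K v)"
    and "(\<integral>w. f w \<partial>kernel_prod N K) = (\<integral>v. \<integral>y. f (v, y) \<partial>K v \<partial>N)"
proof -
  define fp where "fp w = max (f w) 0" for w
  define fm where "fm w = max (- f w) 0" for w
  have split: "f w = fp w - fm w" for w
    by (auto simp: fp_def fm_def max_def)
  have fp: "fp \<in> borel_measurable borel" "integrable (kernel_prod N K) fp"
    and fm: "fm \<in> borel_measurable borel" "integrable (kernel_prod N K) fm"
    using f int by (auto simp: fp_def[abs_def] fm_def[abs_def])
  note P = integral_kernel_prod_nonneg[OF N fp(1) _ fp(2)]
    and M = integral_kernel_prod_nonneg[OF N fm(1) _ fm(2)]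
  have nonneg: "0 \<le> fp w" "0 \<le> fm w" for w
    by (simp_all add: fp_def fm_def)
  have sections: "AE v in N. (\<integral>y. f (v, y) \<partial>K v) = (\<integral>y. fp (v, y) \<partial>K v) - (\<integral>y. fm (v, y) \<partial>K v)"
    using P(1)[OF nonneg(1)] M(1)[OF nonneg(2)] by eventually_elim (simp add: split)
  have G_meas: "(\<lambda>v. \<integral>y. f (v, y) \<partial>K v) \<in> borel_measurable N"
    unfolding measurable_cong_sets[OF N refl] by (rule measurable_kernel_integral[OF f])
  have diff_int: "integrable N (\<lambda>v. (\<integral>y. fp (v, y) \<partial>K v) - (\<integral>y. fm (v, y) \<partial>K v))"
    using P(2)[OF nonneg(1)] M(2)[OF nonneg(2)] by simp
  show "integrable N (\<lambda>v. \<integral>y. f (v, y) \<partial>K v)"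
    by (rule integrable_cong_AE_imp[OF diff_int G_meas]) (use sections in auto)
  have "(\<integral>w. f w \<partial>kernel_prod N K) = (\<integral>w. fp w \<partial>kernel_prod N K) - (\<integral>w. fm w \<partial>kernel_prod N K)"
    using fp(2) fm(2) by (simp add: split)
  also have "\<dots> = (\<integral>v. (\<integral>y. fp (v, y) \<partial>K v) - (\<integral>y. fm (v, y) \<partial>K v) \<partial>N)"
    using P(2,3)[OF nonneg(1)] M(2,3)[OF nonneg(2)] by simp
  also have "\<dots> = (\<integral>v. \<integral>y. f (v, y) \<partial>K v \<partial>N)"
    by (rule integral_cong_AE[OF borel_measurable_integrable[OF diff_int] G_meas])
      (use sections in auto)
  finally show "(\<integral>w. f w \<partial>kernel_prod N K) = (\<integral>v. \<integral>y. f (v, y) \<partial>K v \<partial>N)" .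
qed

end

lemma prob_space_finite_measure_subalgebra:
  "prob_space M \<Longrightarrow> subalgebra M F \<Longrightarrow> finite_measure_subalgebra M F"
  by (intro finite_measure_subalgebra.intro finite_measure_subalgebra_axioms.intro)
    (simp_all add: prob_space.finite_measure)

lemma measurable_fst_borel:
  "fst \<in> (borel :: ('a::second_countable_topology \<times> 'b::second_countable_topology) measure) \<rightarrow>\<^sub>M borel"
  using measurable_fst[of "borel :: 'a measure" "borel :: 'b measure"] by (simp only: borel_prod)

lemma measurable_snd_borel:
  "snd \<in> (borel :: ('a::second_countable_topology \<times> 'b::second_countable_topology) measure) \<rightarrow>\<^sub>M borel"
  using measurable_snd[of "borel :: 'a measure" "borel :: 'b measure"] by (simp only: borel_prod)

lemma sets_sigma_XZ:
  "S \<in> sets (sigma_XZ :: (('x::euclidean_space \<times> 'z::euclidean_space) \<times> real) measure)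
    \<longleftrightarrow> (\<exists>B \<in> sets borel. S = fst -` B)"
  unfolding sigma_XZ_def by (subst sets_vimage_algebra2) auto

lemma subalgebra_sigma_XZ:
  fixes M :: "(('x::euclidean_space \<times> 'z::euclidean_space) \<times> real) measure"
  assumes M: "sets M = sets borel"
  shows "subalgebra M sigma_XZ"
  unfolding subalgebra_def
proof
  have "fst -` B \<in> sets M" if "B \<in> sets borel" for B :: "('x \<times> 'z) set"
    using measurable_sets[OF measurable_fst_borel that] M by simp
  then show "sets sigma_XZ \<subseteq> sets M"
    by (auto simp: sets_sigma_XZ)
  show "space sigma_XZ = space M"
    using sets_eq_imp_space_eq[OF M] by (simp add: sigma_XZ_def)
qed

lemma subalgebra_sigma_XZ_sigma_X:
  "subalgebra (sigma_XZ :: (('x::euclidean_space \<times> 'z::euclidean_space) \<times> real) measure) sigma_X"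
  unfolding subalgebra_def
proof
  show "sets sigma_X \<subseteq> sets (sigma_XZ :: (('x \<times> 'z) \<times> real) measure)"
  proof
    fix S assume "S \<in> sets (sigma_X :: (('x \<times> 'z) \<times> real) measure)"
    then obtain B :: "'x set" where B: "B \<in> sets borel" "S = (\<lambda>w. fst (fst w)) -` B"
      unfolding sigma_X_def by (subst (asm) sets_vimage_algebra2) auto
    have "fst -` B \<in> sets (borel :: ('x \<times> 'z) measure)"
      using measurable_sets[OF measurable_fst_borel B(1)] by simp
    then show "S \<in> sets sigma_XZ"
      using B(2) by (auto simp: sets_sigma_XZ vimage_def)
  qed
qed (simp add: sigma_X_def sigma_XZ_def)

lemma subalgebra_sigma_X:
  fixes M :: "(('x::euclidean_space \<times> 'z::euclidean_space) \<times> real) measure"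
  assumes "sets M = sets borel"
  shows "subalgebra M sigma_X"
  using subalgebra_sigma_XZ[OF assms] subalgebra_sigma_XZ_sigma_X unfolding subalgebra_def by auto

lemma measurable_sigma_XZ_fst:
  assumes "g \<in> borel_measurable borel"
  shows "(\<lambda>w. g (fst w)) \<in> borel_measurable (sigma_XZ :: (('x::euclidean_space \<times> 'z::euclidean_space) \<times> real) measure)"
proof -
  have "fst \<in> (sigma_XZ :: (('x \<times> 'z) \<times> real) measure) \<rightarrow>\<^sub>M borel"
    unfolding sigma_XZ_def by (rule measurable_vimage_algebra1) auto
  from measurable_comp[OF this assms] show ?thesis
    by (simp add: comp_def)
qed

lemma AE_sigma_XZ_transfer:
  fixes M M' :: "(('x::euclidean_space \<times> 'z::euclidean_space) \<times> real) measure"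
    and u u' :: "('x \<times> 'z) \<times> real \<Rightarrow> real"
  assumes M: "sets M = sets borel" and M': "sets M' = sets borel"
    and ac: "absolutely_continuous (marg_XZ M) (marg_XZ M')"
    and u: "u \<in> borel_measurable sigma_XZ" and u': "u' \<in> borel_measurable sigma_XZ"
    and ae: "AE w in M. u w = u' w"
  shows "AE w in M'. u w = u' w"
proof -
  have "{w. u w \<noteq> u' w} \<in> sets (sigma_XZ :: (('x \<times> 'z) \<times> real) measure)"
    using sets.compl_sets[OF measurable_equality_set[OF u u']] by (simp add: sigma_XZ_def set_diff_eq)
  then obtain B where B: "B \<in> sets borel" "{w. u w \<noteq> u' w} = fst -` B"
    by (auto simp: sets_sigma_XZ)
  have fst_M: "fst \<in> M \<rightarrow>\<^sub>M borel" and fst_M': "fst \<in> M' \<rightarrow>\<^sub>M borel"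
    using measurable_fst_borel by (simp_all add: measurable_cong_sets[OF M refl] measurable_cong_sets[OF M' refl])
  have B_compl: "{v \<in> space borel. v \<notin> B} \<in> sets borel"
    using B(1) by auto
  have "AE w in M. fst w \<notin> B"
    using ae by eventually_elim (use B(2) in auto)
  then have "AE v in marg_XZ M. v \<notin> B"
    unfolding marg_XZ_def by (simp add: AE_distr_iff[OF fst_M B_compl])
  then have "AE v in marg_XZ M'. v \<notin> B"
    by (rule absolutely_continuous_AE[rotated, OF ac]) (simp add: marg_XZ_def)
  then have "AE w in M'. fst w \<notin> B"
    unfolding marg_XZ_def by (simp add: AE_distr_iff[OF fst_M' B_compl])
  then show ?thesis
    by eventually_elim (use B(2) in auto)
qed

lemma restr_to_sigma_XZ_eq:
  fixes M M' :: "(('x::euclidean_space \<times> 'z::euclidean_space) \<times> real) measure"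
  assumes M: "sets M = sets borel" and M': "sets M' = sets borel"
    and marg: "marg_XZ M = marg_XZ M'"
  shows "restr_to_subalg M sigma_XZ = restr_to_subalg M' sigma_XZ"
proof (rule measure_eqI)
  show "sets (restr_to_subalg M sigma_XZ) = sets (restr_to_subalg M' sigma_XZ)"
    by (simp add: sets_restr_to_subalg subalgebra_sigma_XZ M M')
  fix A assume "A \<in> sets (restr_to_subalg M sigma_XZ)"
  then have A: "A \<in> sets sigma_XZ"
    by (simp add: sets_restr_to_subalg subalgebra_sigma_XZ M)
  then obtain B where B: "B \<in> sets borel" "A = fst -` B"
    by (auto simp: sets_sigma_XZ)
  have emeasure_restr: "emeasure (restr_to_subalg N sigma_XZ) A = emeasure (marg_XZ N) B"
    if N: "sets N = sets borel" for N :: "(('x \<times> 'z) \<times> real) measure"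
  proof -
    have "fst \<in> N \<rightarrow>\<^sub>M borel"
      using measurable_fst_borel by (simp add: measurable_cong_sets[OF N refl])
    then show ?thesis
      using emeasure_restr_to_subalg[OF subalgebra_sigma_XZ[OF N] A] sets_eq_imp_space_eq[OF N]
      by (simp add: marg_XZ_def emeasure_distr B)
  qed
  show "emeasure (restr_to_subalg M sigma_XZ) A = emeasure (restr_to_subalg M' sigma_XZ) A"
    by (simp add: emeasure_restr M M' marg)
qed

lemma
  fixes M M' :: "(('x::euclidean_space \<times> 'z::euclidean_space) \<times> real) measure"
    and u :: "('x \<times> 'z) \<times> real \<Rightarrow> real"
  assumes M: "sets M = sets borel" and M': "sets M' = sets borel"
    and marg: "marg_XZ M = marg_XZ M'" and u: "u \<in> borel_measurable sigma_XZ"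
  shows integrable_marg_XZ_eq: "integrable M u \<Longrightarrow> integrable M' u"
    and integral_marg_XZ_eq: "(\<integral>w. u w \<partial>M) = (\<integral>w. u w \<partial>M')"
proof -
  note restr = restr_to_sigma_XZ_eq[OF M M' marg]
  show "integrable M u \<Longrightarrow> integrable M' u"
    using integrable_in_subalg[OF subalgebra_sigma_XZ[OF M] u]
      integrable_from_subalg[OF subalgebra_sigma_XZ[OF M']] restr
    by simp
  show "(\<integral>w. u w \<partial>M) = (\<integral>w. u w \<partial>M')"
    using integral_subalgebra2[OF subalgebra_sigma_XZ[OF M] u]
      integral_subalgebra2[OF subalgebra_sigma_XZ[OF M'] u] restr
    by simp
qed

lemma CE_X_marg_XZ_eq:
  fixes M M' :: "(('x::euclidean_space \<times> 'z::euclidean_space) \<times> real) measure"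
    and f :: "('x \<times> 'z) \<times> real \<Rightarrow> real"
  assumes M: "prob_space M" "sets M = sets borel" and M': "prob_space M'" "sets M' = sets borel"
    and marg: "marg_XZ M = marg_XZ M'"
    and f: "f \<in> borel_measurable sigma_XZ" and int: "integrable M f"
  shows "AE w in M. CE_X M f w = CE_X M' f w"
proof -
  interpret P: finite_measure_subalgebra M sigma_X
    by (rule prob_space_finite_measure_subalgebra[OF M(1) subalgebra_sigma_X[OF M(2)]])
  interpret Q: finite_measure_subalgebra M' sigma_X
    by (rule prob_space_finite_measure_subalgebra[OF M'(1) subalgebra_sigma_X[OF M'(2)]])
  define h where "h = real_cond_exp M' sigma_X f"
  have h_X: "h \<in> borel_measurable sigma_X"
    unfolding h_def by (rule borel_measurable_cond_exp)
  have h_XZ: "h \<in> borel_measurable sigma_XZ"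
    by (rule measurable_from_subalg[OF subalgebra_sigma_XZ_sigma_X h_X])
  have int': "integrable M' f"
    by (rule integrable_marg_XZ_eq[OF M(2) M'(2) marg f int])
  have h_int': "integrable M' h"
    unfolding h_def by (rule Q.real_cond_exp_int(1)[OF int'])
  have h_int: "integrable M h"
    by (rule integrable_marg_XZ_eq[OF M'(2) M(2) marg[symmetric] h_XZ h_int'])
  have "AE w in M. real_cond_exp M sigma_X f w = h w"
  proof (rule P.real_cond_exp_charact)
    fix A assume A_X: "A \<in> sets (sigma_X :: (('x \<times> 'z) \<times> real) measure)"
    then have A_XZ: "A \<in> sets sigma_XZ"
      using subalgebra_sigma_XZ_sigma_X by (auto simp: subalgebra_def)
    have restricted: "(\<lambda>w. indicator A w *\<^sub>R g w) \<in> borel_measurable sigma_XZ"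
      if "g \<in> borel_measurable sigma_XZ" for g :: "('x \<times> 'z) \<times> real \<Rightarrow> real"
      using that A_XZ by measurable
    have "(\<integral>w\<in>A. f w \<partial>M) = (\<integral>w\<in>A. f w \<partial>M')"
      unfolding set_lebesgue_integral_def
      by (rule integral_marg_XZ_eq[OF M(2) M'(2) marg restricted[OF f]])
    also have "\<dots> = (\<integral>w\<in>A. h w \<partial>M')"
      unfolding h_def by (rule Q.real_cond_exp_intA[OF int' A_X])
    also have "\<dots> = (\<integral>w\<in>A. h w \<partial>M)"
      unfolding set_lebesgue_integral_def
      by (rule integral_marg_XZ_eq[OF M'(2) M(2) marg[symmetric] restricted[OF h_XZ]])
    finally show "(\<integral>w\<in>A. f w \<partial>M) = (\<integral>w\<in>A. h w \<partial>M)" .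
  qed (use int h_int h_X in auto)
  then show ?thesis
    by (simp add: CE_X_def h_def)
qed

definition kernel_mean :: "('a \<Rightarrow> real measure) \<Rightarrow> 'a \<Rightarrow> real" where
  "kernel_mean K v = (\<integral>y. y \<partial>K v)"

lemma measurable_CE_Y_XZ: "CE_Y_XZ M \<in> borel_measurable sigma_XZ"
  unfolding CE_Y_XZ_def by (rule borel_measurable_cond_exp)

lemma CE_Y_XZ_compose_kernel:
  fixes M :: "(('x::euclidean_space \<times> 'z::euclidean_space) \<times> real) measure"
  assumes V: "valid_regime M" and K: "K \<in> borel \<rightarrow>\<^sub>M prob_algebra borel"
    and MK: "M = compose_kernel M K"
  shows "AE w in M. CE_Y_XZ M w = kernel_mean K (fst w)"
proof -
  have prob: "prob_space M" and sets: "sets M = sets borel" and int: "integrable M snd"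
    using V by (auto simp: valid_regime_def)
  have N: "sets (marg_XZ M) = sets borel"
    by (simp add: marg_XZ_def)
  have M_eq: "kernel_prod (marg_XZ M) K = M"
    using MK by (simp add: compose_kernel_def kernel_prod_def)
  have fst_M: "fst \<in> M \<rightarrow>\<^sub>M borel"
    using measurable_fst_borel by (simp add: measurable_cong_sets[OF sets refl])
  have mean_meas: "kernel_mean K \<in> borel_measurable borel"
    using measurable_kernel_integral[OF K measurable_snd_borel] by (simp add: kernel_mean_def[abs_def])
  note fubini = integral_kernel_prod[OF K N, unfolded M_eq]
  have "integrable (marg_XZ M) (kernel_mean K)"
    using fubini(1)[OF measurable_snd_borel int] by (simp add: kernel_mean_def[abs_def])
  then have mean_int: "integrable M (\<lambda>w. kernel_mean K (fst w))"
    by (simp add: marg_XZ_def integrable_distr_eq[OF fst_M mean_meas])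
  interpret finite_measure_subalgebra M sigma_XZ
    by (rule prob_space_finite_measure_subalgebra[OF prob subalgebra_sigma_XZ[OF sets]])
  have "AE w in M. real_cond_exp M sigma_XZ snd w = kernel_mean K (fst w)"
  proof (rule real_cond_exp_charact)
    fix A assume "A \<in> sets (sigma_XZ :: (('x \<times> 'z) \<times> real) measure)"
    then obtain B where B: "B \<in> sets borel" "A = fst -` B"
      by (auto simp: sets_sigma_XZ)
    have B_snd_meas: "(\<lambda>w::('x \<times> 'z) \<times> real. indicator B (fst w) * snd w) \<in> borel_measurable borel"
      using B(1) measurable_fst_borel measurable_snd_borel by measurable
    have "fst -` B \<in> sets M"
      using measurable_sets[OF fst_M B(1)] sets_eq_imp_space_eq[OF sets] by simp
    then have B_snd_int: "integrable M (\<lambda>w. indicator B (fst w) * snd w)"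
      using integrable_mult_indicator[OF _ int] by (force simp: indicator_def)
    have "(\<integral>w\<in>A. snd w \<partial>M) = (\<integral>w. indicator B (fst w) * snd w \<partial>M)"
      unfolding set_lebesgue_integral_def B(2) by (simp add: indicator_def)
    also have "\<dots> = (\<integral>v. indicator B v * kernel_mean K v \<partial>marg_XZ M)"
      using fubini(2)[OF B_snd_meas B_snd_int] by (simp add: kernel_mean_def)
    also have "\<dots> = (\<integral>w. indicator B (fst w) * kernel_mean K (fst w) \<partial>M)"
      unfolding marg_XZ_def by (rule integral_distr[OF fst_M]) (use B(1) mean_meas in measurable)
    also have "\<dots> = (\<integral>w\<in>A. kernel_mean K (fst w) \<partial>M)"
      unfolding set_lebesgue_integral_def B(2) by (simp add: indicator_def)
    finally show "(\<integral>w\<in>A. snd w \<partial>M) = (\<integral>w\<in>A. kernel_mean K (fst w) \<partial>M)" .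
  qed (use int mean_int measurable_sigma_XZ_fst[OF mean_meas] in auto)
  then show ?thesis
    by (simp add: CE_Y_XZ_def)
qed

lemma regime_None [simp]: "regime P0 P1 None = P0"
  and regime_Some [simp]: "regime P0 P1 (Some th) = P1 th"
  by (simp_all add: regime_def)

lemma in_subclass_valid_regime:
  "in_subclass P0 P1 \<Longrightarrow> valid_regime (regime P0 P1 r)"
  by (simp add: in_subclass_def)

lemma in_subclass_absolutely_continuous:
  "in_subclass P0 P1 \<Longrightarrow> absolutely_continuous (marg_XZ (regime P0 P1 r')) (marg_XZ (regime P0 P1 r))"
  by (simp add: in_subclass_def XZ_abs_cont_def)

lemma CE_Y_XZ_regime_invariant:
  fixes P0 :: "(('x::euclidean_space \<times> 'z::euclidean_space) \<times> real) measure"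
  assumes "in_subclass P0 P1"
  shows "AE w in regime P0 P1 r'. CE_Y_XZ (regime P0 P1 r) w = CE_Y_XZ (regime P0 P1 r') w"
proof -
  obtain K where K: "K \<in> borel \<rightarrow>\<^sub>M prob_algebra borel"
    and composed: "\<And>r. regime P0 P1 r = compose_kernel (regime P0 P1 r) K"
    using assms unfolding in_subclass_def trans_CI_def by blast
  note valid = in_subclass_valid_regime[OF assms]
    and ac = in_subclass_absolutely_continuous[OF assms]
  have sets: "sets (regime P0 P1 r) = sets borel" for r
    using valid by (simp add: valid_regime_def)
  have mean_meas: "(\<lambda>w. kernel_mean K (fst w)) \<in> borel_measurable sigma_XZ"
    using measurable_kernel_integral[OF K measurable_snd_borel]
    by (intro measurable_sigma_XZ_fst) (simp add: kernel_mean_def[abs_def])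
  note regression = CE_Y_XZ_compose_kernel[OF valid K composed]
  have "AE w in regime P0 P1 r'. CE_Y_XZ (regime P0 P1 r) w = kernel_mean K (fst w)"
    by (rule AE_sigma_XZ_transfer[OF sets sets ac measurable_CE_Y_XZ mean_meas regression])
  with regression[of r'] show ?thesis
    by eventually_elim simp
qed

lemma integral_CE_Y_XZ_regime:
  fixes P0 :: "(('x::euclidean_space \<times> 'z::euclidean_space) \<times> real) measure"
  assumes S: "in_subclass P0 P1"
  shows "integrable (regime P0 P1 r') (CE_Y_XZ (regime P0 P1 r))"
    and "(\<integral>w. CE_Y_XZ (regime P0 P1 r) w \<partial>regime P0 P1 r') = EY (regime P0 P1 r')"
proof -
  let ?M = "regime P0 P1 r'"
  have prob: "prob_space ?M" and sets: "sets ?M = sets borel" and int: "integrable ?M snd"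
    using in_subclass_valid_regime[OF S] by (auto simp: valid_regime_def)
  interpret finite_measure_subalgebra ?M sigma_XZ
    by (rule prob_space_finite_measure_subalgebra[OF prob subalgebra_sigma_XZ[OF sets]])
  have meas: "CE_Y_XZ (regime P0 P1 r'') \<in> borel_measurable ?M" for r''
    by (rule measurable_from_subalg[OF subalgebra_sigma_XZ[OF sets] measurable_CE_Y_XZ])
  note invariant = CE_Y_XZ_regime_invariant[OF S, where r'=r']
  have own: "integrable ?M (CE_Y_XZ ?M)" "(\<integral>w. CE_Y_XZ ?M w \<partial>?M) = EY ?M"
    using real_cond_exp_int[OF int] by (simp_all add: CE_Y_XZ_def EY_def)
  show "integrable ?M (CE_Y_XZ (regime P0 P1 r))"
    by (rule integrable_cong_AE_imp[OF own(1) meas AE_symmetric[OF invariant]])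
  show "(\<integral>w. CE_Y_XZ (regime P0 P1 r) w \<partial>?M) = EY ?M"
    using integral_cong_AE[OF meas meas invariant] own(2) by simp
qed

lemma EY_identified:
  fixes P0 Q0 :: "(('x::euclidean_space \<times> 'z::euclidean_space) \<times> real) measure"
  assumes P: "in_subclass P0 P1" and Q: "in_subclass Q0 Q1"
    and same: "regime Q0 Q1 r = regime P0 P1 r"
    and marg: "marg_XZ (regime Q0 Q1 r') = marg_XZ (regime P0 P1 r')"
  shows "EY (regime Q0 Q1 r') = EY (regime P0 P1 r')"
proof -
  have sets: "sets (regime Q0 Q1 r') = sets borel" "sets (regime P0 P1 r') = sets borel"
    using in_subclass_valid_regime[OF Q] in_subclass_valid_regime[OF P] by (simp_all add: valid_regime_def)
  have "EY (regime Q0 Q1 r') = (\<integral>w. CE_Y_XZ (regime P0 P1 r) w \<partial>regime Q0 Q1 r')"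
    using integral_CE_Y_XZ_regime(2)[OF Q, where r=r and r'=r'] same by simp
  also have "\<dots> = (\<integral>w. CE_Y_XZ (regime P0 P1 r) w \<partial>regime P0 P1 r')"
    by (rule integral_marg_XZ_eq[OF sets marg measurable_CE_Y_XZ])
  also have "\<dots> = EY (regime P0 P1 r')"
    by (rule integral_CE_Y_XZ_regime(2)[OF P])
  finally show ?thesis .
qed

lemma CE_X_Y_eq_CE_X_CE_Y_XZ:
  fixes P0 :: "(('x::euclidean_space \<times> 'z::euclidean_space) \<times> real) measure"
  assumes S: "in_subclass P0 P1"
  shows "AE w in regime P0 P1 r'.
    CE_X (regime P0 P1 r') snd w = CE_X (regime P0 P1 r') (CE_Y_XZ (regime P0 P1 r)) w"
proof -
  let ?M = "regime P0 P1 r'"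
  have prob: "prob_space ?M" and sets: "sets ?M = sets borel" and int: "integrable ?M snd"
    using in_subclass_valid_regime[OF S] by (auto simp: valid_regime_def)
  interpret finite_measure_subalgebra ?M sigma_X
    by (rule prob_space_finite_measure_subalgebra[OF prob subalgebra_sigma_X[OF sets]])
  have meas: "CE_Y_XZ (regime P0 P1 r'') \<in> borel_measurable ?M" for r''
    by (rule measurable_from_subalg[OF subalgebra_sigma_XZ[OF sets] measurable_CE_Y_XZ])
  have tower: "AE w in ?M. CE_X ?M (CE_Y_XZ ?M) w = CE_X ?M snd w"
    unfolding CE_X_def CE_Y_XZ_def
    by (rule real_cond_exp_nested_subalg[OF subalgebra_sigma_XZ[OF sets] subalgebra_sigma_XZ_sigma_X int])
  have "AE w in ?M. CE_X ?M (CE_Y_XZ (regime P0 P1 r)) w = CE_X ?M (CE_Y_XZ ?M) w"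
    unfolding CE_X_def by (rule real_cond_exp_cong[OF CE_Y_XZ_regime_invariant[OF S] meas meas])
  with tower show ?thesis
    by eventually_elim simp
qed

lemma CE_X_Y_identified:
  fixes P0 Q0 :: "(('x::euclidean_space \<times> 'z::euclidean_space) \<times> real) measure"
  assumes P: "in_subclass P0 P1" and Q: "in_subclass Q0 Q1"
    and same: "regime Q0 Q1 r = regime P0 P1 r"
    and marg: "marg_XZ (regime Q0 Q1 r') = marg_XZ (regime P0 P1 r')"
  shows "AE w in regime P0 P1 r'. CE_X (regime Q0 Q1 r') snd w = CE_X (regime P0 P1 r') snd w"
proof -
  let ?M = "regime P0 P1 r'" and ?N = "regime Q0 Q1 r'" and ?f = "CE_Y_XZ (regime P0 P1 r)"
  have valid: "valid_regime ?M" "valid_regime ?N"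
    using in_subclass_valid_regime P Q by blast+
  then have sets: "sets ?M = sets borel" "sets ?N = sets borel"
    and prob: "prob_space ?M" "prob_space ?N"
    by (simp_all add: valid_regime_def)
  have CE_X_meas: "CE_X ?N g \<in> borel_measurable sigma_XZ" for g
    unfolding CE_X_def by (rule measurable_from_subalg[OF subalgebra_sigma_XZ_sigma_X borel_measurable_cond_exp])
  have "AE w in ?N. CE_X ?N snd w = CE_X ?N ?f w"
    using CE_X_Y_eq_CE_X_CE_Y_XZ[OF Q, where r=r and r'=r'] same by simp
  moreover have "absolutely_continuous (marg_XZ ?N) (marg_XZ ?M)"
    by (simp add: marg absolutely_continuous_def)
  ultimately have on_N: "AE w in ?M. CE_X ?N snd w = CE_X ?N ?f w"
    using AE_sigma_XZ_transfer[OF sets(2,1) _ CE_X_meas CE_X_meas] by blast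
  have shared: "AE w in ?M. CE_X ?M ?f w = CE_X ?N ?f w"
    by (rule CE_X_marg_XZ_eq[OF prob(1) sets(1) prob(2) sets(2) marg[symmetric] measurable_CE_Y_XZ
          integral_CE_Y_XZ_regime(1)[OF P]])
  from on_N shared CE_X_Y_eq_CE_X_CE_Y_XZ[OF P, where r=r and r'=r'] show ?thesis
    by eventually_elim simp
qed

theorem corollary1:
  fixes P0 :: "(('x::euclidean_space \<times> 'z::euclidean_space) \<times> real) measure"
    and P1 :: "'p \<Rightarrow> (('x \<times> 'z) \<times> real) measure"
    and th th_t th_t1 :: 'p
  assumes "in_subclass P0 P1"
  shows
    \<comment> \<open>(T1), first identification\<close>
    "deploy_effect P0 P1 th = (\<integral>w. CE_Y_XZ P0 w \<partial>(P1 th)) - EY P0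
     \<and> (\<forall>Q0 Q1. in_subclass Q0 Q1 \<longrightarrow> Q0 = P0 \<longrightarrow> marg_XZ (Q1 th) = marg_XZ (P1 th)
          \<longrightarrow> deploy_effect Q0 Q1 th = deploy_effect P0 P1 th)
     \<comment> \<open>(T1), second identification\<close>
     \<and> deploy_effect P0 P1 th = EY (P1 th) - (\<integral>w. CE_Y_XZ (P1 th) w \<partial>P0)
     \<and> (\<forall>Q0 Q1. in_subclass Q0 Q1 \<longrightarrow> Q1 th = P1 th \<longrightarrow> marg_XZ Q0 = marg_XZ P0
          \<longrightarrow> deploy_effect Q0 Q1 th = deploy_effect P0 P1 th)
     \<comment> \<open>(T2)\<close>
     \<and> retrain_effect P1 th_t1 th_t = (\<integral>w. CE_Y_XZ (P1 th_t) w \<partial>(P1 th_t1)) - EY (P1 th_t)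
     \<and> (\<forall>Q0 Q1. in_subclass Q0 Q1 \<longrightarrow> Q1 th_t = P1 th_t \<longrightarrow> marg_XZ (Q1 th_t1) = marg_XZ (P1 th_t1)
          \<longrightarrow> retrain_effect Q1 th_t1 th_t = retrain_effect P1 th_t1 th_t)
     \<comment> \<open>(T3)\<close>
     \<and> (AE w in P0. CE_X P0 snd w = CE_X P0 (CE_Y_XZ (P1 th)) w)
     \<and> (\<forall>Q0 Q1. in_subclass Q0 Q1 \<longrightarrow> Q1 th = P1 th \<longrightarrow> marg_XZ Q0 = marg_XZ P0
          \<longrightarrow> (AE w in P0. CE_X Q0 snd w = CE_X P0 snd w))"
proof (intro conjI allI impI)
  note integral_CE = integral_CE_Y_XZ_regime(2)[OF assms]
  show "deploy_effect P0 P1 th = (\<integral>w. CE_Y_XZ P0 w \<partial>(P1 th)) - EY P0"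
    using integral_CE[where r=None and r'="Some th"] by (simp add: deploy_effect_def)
  show "deploy_effect P0 P1 th = EY (P1 th) - (\<integral>w. CE_Y_XZ (P1 th) w \<partial>P0)"
    using integral_CE[where r="Some th" and r'=None] by (simp add: deploy_effect_def)
  show "retrain_effect P1 th_t1 th_t = (\<integral>w. CE_Y_XZ (P1 th_t) w \<partial>(P1 th_t1)) - EY (P1 th_t)"
    using integral_CE[where r="Some th_t" and r'="Some th_t1"] by (simp add: retrain_effect_def)
  show "AE w in P0. CE_X P0 snd w = CE_X P0 (CE_Y_XZ (P1 th)) w"
    using CE_X_Y_eq_CE_X_CE_Y_XZ[OF assms, where r="Some th" and r'=None] unfolding regime_None regime_Some .
next
  fix Q0 Q1 assume "in_subclass Q0 Q1" "Q0 = P0" "marg_XZ (Q1 th) = marg_XZ (P1 th)"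
  then show "deploy_effect Q0 Q1 th = deploy_effect P0 P1 th"
    using EY_identified[OF assms, of Q0 Q1 None "Some th"] by (simp add: deploy_effect_def)
next
  fix Q0 Q1 assume "in_subclass Q0 Q1" "Q1 th = P1 th" "marg_XZ Q0 = marg_XZ P0"
  then show "deploy_effect Q0 Q1 th = deploy_effect P0 P1 th"
    using EY_identified[OF assms, of Q0 Q1 "Some th" None] by (simp add: deploy_effect_def)
next
  fix Q0 Q1 assume "in_subclass Q0 Q1" "Q1 th_t = P1 th_t" "marg_XZ (Q1 th_t1) = marg_XZ (P1 th_t1)"
  then show "retrain_effect Q1 th_t1 th_t = retrain_effect P1 th_t1 th_t"
    using EY_identified[OF assms, of Q0 Q1 "Some th_t" "Some th_t1"] by (simp add: retrain_effect_def)
next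
  fix Q0 Q1 assume "in_subclass Q0 Q1" "Q1 th = P1 th" "marg_XZ Q0 = marg_XZ P0"
  then show "AE w in P0. CE_X Q0 snd w = CE_X P0 snd w"
    using CE_X_Y_identified[OF assms, of Q0 Q1 "Some th" None] unfolding regime_None regime_Some by simp
qed

end
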